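(* Let $x_0\in(0,1)$ and let $a,b$ satisfy one of the conditions (H2), (H3), (H4) of the context. Then there exists a constant $\overline C_{HP}>0$ such that \[\int_0^1\frac{u^2}{ab}\,dx\le\overline C_{HP}\int_0^1(u')^2dx\] for every $u\in\mathcal K_{a,b}:=\{u\in L^2_{\frac1a}(0,1)\cap H^1_0(0,1): u/\sqrt{ab}\in L^2(0,1)\}$.
   Context: $a,b:[0,1]\to\mathbb R$ with $a(x_0)=b(x_0)=0$, $a,b>0$ on $[0,1]\setminus\{x_0\}$. $L^2_{\frac1a}(0,1)=\{u\in L^2:\int u^2/a<\infty\}$. Degeneracy types: (WWD) $a,b\in W^{1,1}(0,1)$ and $K_1,K_2\in(0,1)$ with $(x-x_0)a'\le K_1a$, $(x-x_0)b'\le K_2b$ a.e.; (SSD) $a,b\in W^{1,\infty}(0,1)$ with the same inequalities and $K_1,K_2\in[1,2)$; (WSD) $a\in W^{1,1}$, $b\in W^{1,\infty}$, $K_1\in(0,1)$, $K_2\in[1,2)$; (SWD) $a\in W^{1,\infty}$, $b\in W^{1,1}$, $K_1\in[1,2)$, $K_2\in(0,1)$. (H2): (WWD) with $1\le K_1+K_2\le2$ and there exist $c_1,c_2>0$ with $|x-x_0|^{K_1}\ge c_1a(x)$, $|x-x_0|^{K_2}\ge c_2b(x)$ for all $x\in[0,1]$; (H3): (WSD) or (SWD) with $K_1+K_2\le2$ and such $c_1,c_2$; (H4): (SSD) with $K_1=K_2=1$. *)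

theory Defs
  imports "HOL-Analysis.Analysis"
begin

text \<open>W^{1,1}(0,1): the (continuous representative of the) function a is absolutely
continuous on [0,1], with integrable weak derivative a'.\<close>
definition W11 :: "(real \<Rightarrow> real) \<Rightarrow> (real \<Rightarrow> real) \<Rightarrow> bool" where
  "W11 a a' \<longleftrightarrow> set_integrable lborel {0..1} a' \<and>
     (\<forall>x\<in>{0..1}. a x = a 0 + (LBINT t:{0..x}. a' t))"

definition W1inf :: "(real \<Rightarrow> real) \<Rightarrow> (real \<Rightarrow> real) \<Rightarrow> bool" where
  "W1inf a a' \<longleftrightarrow> W11 a a' \<and> (\<exists>M. AE x in lborel. x \<in> {0..1} \<longrightarrow> \<bar>a' x\<bar> \<le> M)"

definition weak_deg :: "(real \<Rightarrow> real) \<Rightarrow> real \<Rightarrow> real \<Rightarrow> bool" where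
  "weak_deg a x0 K \<longleftrightarrow> 0 < K \<and> K < 1 \<and>
     (\<exists>a'. W11 a a' \<and> (AE x in lborel. x \<in> {0..1} \<longrightarrow> (x - x0) * a' x \<le> K * a x))"

definition strong_deg :: "(real \<Rightarrow> real) \<Rightarrow> real \<Rightarrow> real \<Rightarrow> bool" where
  "strong_deg a x0 K \<longleftrightarrow> 1 \<le> K \<and> K < 2 \<and>
     (\<exists>a'. W1inf a a' \<and> (AE x in lborel. x \<in> {0..1} \<longrightarrow> (x - x0) * a' x \<le> K * a x))"

definition WWD where "WWD a b x0 K1 K2 \<longleftrightarrow> weak_deg a x0 K1 \<and> weak_deg b x0 K2"
definition SSD where "SSD a b x0 K1 K2 \<longleftrightarrow> strong_deg a x0 K1 \<and> strong_deg b x0 K2"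
definition WSD where "WSD a b x0 K1 K2 \<longleftrightarrow> weak_deg a x0 K1 \<and> strong_deg b x0 K2"
definition SWD where "SWD a b x0 K1 K2 \<longleftrightarrow> strong_deg a x0 K1 \<and> weak_deg b x0 K2"

definition power_bound :: "(real \<Rightarrow> real) \<Rightarrow> (real \<Rightarrow> real) \<Rightarrow> real \<Rightarrow> real \<Rightarrow> real \<Rightarrow> bool" where
  "power_bound a b x0 K1 K2 \<longleftrightarrow> (\<exists>c1 c2. c1 > 0 \<and> c2 > 0 \<and>
     (\<forall>x\<in>{0..1}. \<bar>x - x0\<bar> powr K1 \<ge> c1 * a x \<and> \<bar>x - x0\<bar> powr K2 \<ge> c2 * b x))"

definition H2 :: "(real \<Rightarrow> real) \<Rightarrow> (real \<Rightarrow> real) \<Rightarrow> real \<Rightarrow> bool" where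
  "H2 a b x0 \<longleftrightarrow> (\<exists>K1 K2. WWD a b x0 K1 K2 \<and> 1 \<le> K1 + K2 \<and> K1 + K2 \<le> 2 \<and>
     power_bound a b x0 K1 K2)"

definition H3 :: "(real \<Rightarrow> real) \<Rightarrow> (real \<Rightarrow> real) \<Rightarrow> real \<Rightarrow> bool" where
  "H3 a b x0 \<longleftrightarrow> (\<exists>K1 K2. (WSD a b x0 K1 K2 \<or> SWD a b x0 K1 K2) \<and> K1 + K2 \<le> 2 \<and>
     power_bound a b x0 K1 K2)"

definition H4 :: "(real \<Rightarrow> real) \<Rightarrow> (real \<Rightarrow> real) \<Rightarrow> real \<Rightarrow> bool" where
  "H4 a b x0 \<longleftrightarrow> SSD a b x0 1 1"

text \<open>H^1_0(0,1): u is the (continuous representative) primitive of an L^2 function u'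
with u(0) = u(1) = 0.\<close>
definition H10 :: "(real \<Rightarrow> real) \<Rightarrow> (real \<Rightarrow> real) \<Rightarrow> bool" where
  "H10 u u' \<longleftrightarrow> set_borel_measurable lborel {0..1} u' \<and>
     set_integrable lborel {0..1} (\<lambda>x. (u' x)\<^sup>2) \<and>
     (\<forall>x\<in>{0..1}. u x = (LBINT t:{0..x}. u' t)) \<and> u 1 = 0"

end

theory Submission
  imports Defs
begin

text \<open>Integrating the degeneracy inequality (x - x0) a' \<le> K a from x to the endpoints (a Gronwall
  argument) gives a \<ge> c |x - x0|^K, so K1 + K2 \<le> 2 yields a b \<ge> c (x - x0)^2.
  On the other hand a b \<le> M |x - x0|, which makes 1/(a b) non-integrable at x0; hence
  u^2/(a b) \<in> L^1 forces u(x0) = 0, and the classical Hardy inequality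
  \<integral> u^2/(x - x0)^2 \<le> 4 \<integral> u'^2, applied on both sides of x0, gives the claim with constant 4/c.\<close>

lemma nn_integral_powr_neg_half:
  assumes "x > 0"
  shows "(\<integral>\<^sup>+s\<in>{0<..x}. ennreal (s powr (-1/2)) \<partial>lborel) = ennreal (2 * sqrt x)"
proof -
  have "((\<lambda>s. s powr (-1/2)) has_integral (2 * sqrt x - 2 * sqrt 0)) {0..x}"
  proof (rule fundamental_theorem_of_calculus_interior[where f="\<lambda>s. 2 * sqrt s"])
    show "continuous_on {0..x} (\<lambda>s. 2 * sqrt s)"
      by (intro continuous_intros)
    fix s assume s: "s \<in> {0<..<x}"
    have "((\<lambda>s. 2 * sqrt s) has_real_derivative 2 * (inverse (sqrt s) / 2)) (at s)"
      using s by (intro DERIV_cmult DERIV_real_sqrt) auto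
    moreover have "2 * (inverse (sqrt s) / 2) = s powr (-1/2)"
      using s by (simp add: powr_minus powr_half_sqrt[symmetric] divide_simps)
    ultimately show "((\<lambda>s. 2 * sqrt s) has_vector_derivative s powr (-1/2)) (at s)"
      by (simp add: has_real_derivative_iff_has_vector_derivative[symmetric])
  qed (use assms in simp)
  then have "((\<lambda>s. s powr (-1/2)) has_integral (2 * sqrt x)) {0<..x}"
    by (subst has_integral_spike_set_eq[where T="{0..x}"])
       (auto intro: negligible_subset[of "{0}"])
  then show ?thesis
    by (rule nn_integral_has_integral_lebesgue'[rotated]) auto
qed

lemma nn_integral_powr_neg_three_halves_le:
  assumes "s > 0"
  shows "(\<integral>\<^sup>+x\<in>{s..L}. ennreal (2 * x powr (-3/2)) \<partial>lborel) \<le> ennreal (4 / sqrt s)"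
proof (cases "s \<le> L")
  case True
  have "((\<lambda>x. 2 * x powr (-3/2)) has_integral (- 4 / sqrt L - - 4 / sqrt s)) {s..L}"
  proof (rule fundamental_theorem_of_calculus[where f="\<lambda>x. - 4 / sqrt x"])
    fix x assume "x \<in> {s..L}"
    then have x: "x > 0" using assms by auto
    have "((\<lambda>x. - 4 / sqrt x) has_real_derivative (0 * sqrt x - (- 4) * (inverse (sqrt x) / 2)) / (sqrt x * sqrt x)) (at x)"
      using x by (intro DERIV_divide DERIV_const DERIV_real_sqrt) auto
    moreover have "(0 * sqrt x - (- 4) * (inverse (sqrt x) / 2)) / (sqrt x * sqrt x) = 2 * x powr (-3/2)"
    proof -
      have "x powr (3/2) = x * sqrt x"
        using x powr_add[of x 1 "1/2"] by (simp add: powr_half_sqrt)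
      then show ?thesis
        using x by (simp add: powr_minus field_simps)
    qed
    ultimately show "((\<lambda>x. - 4 / sqrt x) has_vector_derivative 2 * x powr (-3/2)) (at x within {s..L})"
      by (simp add: has_real_derivative_iff_has_vector_derivative[symmetric] has_field_derivative_at_within)
  qed (use True in simp)
  then have "(\<integral>\<^sup>+x\<in>{s..L}. ennreal (2 * x powr (-3/2)) \<partial>lborel) = ennreal (4 / sqrt s - 4 / sqrt L)"
    by (intro nn_integral_has_integral_lebesgue') auto
  also have "\<dots> \<le> ennreal (4 / sqrt s)"
    using True assms by (intro ennreal_leI) auto
  finally show ?thesis .
qed simp

lemma Cauchy_Schwarz_nn_integral_Ioc:
  fixes v :: "real \<Rightarrow> real"
  assumes "x > 0" and [measurable]: "v \<in> borel_measurable borel"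
  shows "(\<integral>\<^sup>+s\<in>{0<..x}. ennreal \<bar>v s\<bar> \<partial>lborel)\<^sup>2
    \<le> ennreal (2 * sqrt x) * (\<integral>\<^sup>+s\<in>{0<..x}. ennreal ((v s)\<^sup>2 * s powr (1/2)) \<partial>lborel)"
proof -
  let ?f = "\<lambda>s. ennreal (\<bar>v s\<bar> * s powr (1/4)) * indicator {0<..x} s"
  let ?g = "\<lambda>s. ennreal (s powr (-1/4)) * indicator {0<..x} s"
  have sq: "(s powr r)\<^sup>2 = s powr (2 * r)" for s r :: real
    by (simp only: power2_eq_square powr_add[symmetric] mult_2)
  have fg: "(\<integral>\<^sup>+s\<in>{0<..x}. ennreal \<bar>v s\<bar> \<partial>lborel) = (\<integral>\<^sup>+s. ?f s * ?g s \<partial>lborel)"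
  proof (intro nn_integral_cong)
    fix s
    have "0 < s \<Longrightarrow> \<bar>v s\<bar> * s powr (1/4) * s powr (-1/4) = \<bar>v s\<bar>"
      by (simp add: mult.assoc powr_add[symmetric])
    then show "ennreal \<bar>v s\<bar> * indicator {0<..x} s = ?f s * ?g s"
      by (cases "s \<in> {0<..x}") (simp_all add: ennreal_mult'[symmetric])
  qed
  have f2: "(\<integral>\<^sup>+s. (?f s)\<^sup>2 \<partial>lborel)
      = (\<integral>\<^sup>+s\<in>{0<..x}. ennreal ((v s)\<^sup>2 * s powr (1/2)) \<partial>lborel)"
  proof (intro nn_integral_cong)
    fix s
    have "(\<bar>v s\<bar> * s powr (1/4 :: real))\<^sup>2 = (v s)\<^sup>2 * s powr (1/2)"
      by (simp add: power_mult_distrib sq)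
    then show "(?f s)\<^sup>2 = ennreal ((v s)\<^sup>2 * s powr (1/2)) * indicator {0<..x} s"
      by (cases "s \<in> {0<..x}") (simp_all add: ennreal_power)
  qed
  have "(\<integral>\<^sup>+s. (?g s)\<^sup>2 \<partial>lborel) = (\<integral>\<^sup>+s\<in>{0<..x}. ennreal (s powr (-1/2)) \<partial>lborel)"
  proof (intro nn_integral_cong)
    fix s
    have "(s powr (-1/4 :: real))\<^sup>2 = s powr (-1/2)"
      by (simp add: sq)
    then show "(?g s)\<^sup>2 = ennreal (s powr (-1/2)) * indicator {0<..x} s"
      by (cases "s \<in> {0<..x}") (simp_all add: ennreal_power)
  qed
  also have "\<dots> = ennreal (2 * sqrt x)"
    using assms(1) by (rule nn_integral_powr_neg_half)
  finally have g2: "(\<integral>\<^sup>+s. (?g s)\<^sup>2 \<partial>lborel) = ennreal (2 * sqrt x)" .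
  have "(\<integral>\<^sup>+s. ?f s * ?g s \<partial>lborel)\<^sup>2 \<le> (\<integral>\<^sup>+s. (?f s)\<^sup>2 \<partial>lborel) * (\<integral>\<^sup>+s. (?g s)\<^sup>2 \<partial>lborel)"
    by (rule Cauchy_Schwarz_nn_integral) measurable
  then show ?thesis
    unfolding fg f2 g2 by (simp add: mult.commute)
qed

lemma nn_integral_Hardy_kernel_le:
  fixes g :: "real \<Rightarrow> ennreal"
  assumes [measurable]: "g \<in> borel_measurable borel"
  shows "(\<integral>\<^sup>+x. ennreal (2 * x powr (-3/2)) * indicator {0<..L} x * (\<integral>\<^sup>+s\<in>{0<..x}. g s \<partial>lborel) \<partial>lborel)
    \<le> (\<integral>\<^sup>+s. g s * indicator {0<..L} s * ennreal (4 / sqrt s) \<partial>lborel)"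
proof -
  define F where "F x s = ennreal (2 * x powr (-3/2)) * indicator {0<..L} x * (g s * indicator {0<..x} s)" for x s
  have "case_prod (\<lambda>s x. F x s) = (\<lambda>p. ennreal (2 * snd p powr (-3/2)) * indicator {0<..L} (snd p)
      * (g (fst p) * (if 0 < fst p \<and> fst p \<le> snd p then 1 else 0)))"
    by (auto simp: F_def indicator_def fun_eq_iff)
  also have "\<dots> \<in> borel_measurable (lborel \<Otimes>\<^sub>M lborel)"
    by measurable
  finally have F_measurable: "case_prod (\<lambda>s x. F x s) \<in> borel_measurable (lborel \<Otimes>\<^sub>M lborel)" .
  have "(\<integral>\<^sup>+x. ennreal (2 * x powr (-3/2)) * indicator {0<..L} x * (\<integral>\<^sup>+s\<in>{0<..x}. g s \<partial>lborel) \<partial>lborel)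
      = (\<integral>\<^sup>+x. \<integral>\<^sup>+s. F x s \<partial>lborel \<partial>lborel)"
    unfolding F_def by (intro nn_integral_cong nn_integral_cmult[symmetric]) measurable
  also have "\<dots> = (\<integral>\<^sup>+s. \<integral>\<^sup>+x. F x s \<partial>lborel \<partial>lborel)"
    by (rule lborel_pair.Fubini'[OF F_measurable])
  also have "\<dots> = (\<integral>\<^sup>+s. g s * indicator {0<..L} s * (\<integral>\<^sup>+x\<in>{s..L}. ennreal (2 * x powr (-3/2)) \<partial>lborel) \<partial>lborel)"
  proof (intro nn_integral_cong)
    fix s
    have "(\<integral>\<^sup>+x. F x s \<partial>lborel)
        = (\<integral>\<^sup>+x. g s * indicator {0<..L} s * (ennreal (2 * x powr (-3/2)) * indicator {s..L} x) \<partial>lborel)"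
      by (intro nn_integral_cong) (auto simp: F_def indicator_def mult.commute)
    also have "\<dots> = g s * indicator {0<..L} s * (\<integral>\<^sup>+x\<in>{s..L}. ennreal (2 * x powr (-3/2)) \<partial>lborel)"
      by (rule nn_integral_cmult) measurable
    finally show "(\<integral>\<^sup>+x. F x s \<partial>lborel) = \<dots>" .
  qed
  also have "\<dots> \<le> (\<integral>\<^sup>+s. g s * indicator {0<..L} s * ennreal (4 / sqrt s) \<partial>lborel)"
  proof (intro nn_integral_mono)
    fix s
    show "g s * indicator {0<..L} s * (\<integral>\<^sup>+x\<in>{s..L}. ennreal (2 * x powr (-3/2)) \<partial>lborel)
        \<le> g s * indicator {0<..L} s * ennreal (4 / sqrt s)"
      using nn_integral_powr_neg_three_halves_le[of s L]
      by (cases "s \<in> {0<..L}") (auto intro!: mult_left_mono)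
  qed
  finally show ?thesis .
qed

lemma Hardy_inequality:
  fixes v w :: "real \<Rightarrow> real"
  assumes [measurable]: "v \<in> borel_measurable borel"
    and w_le: "\<And>x. 0 < x \<Longrightarrow> x \<le> L \<Longrightarrow>
      ennreal \<bar>w x\<bar> \<le> (\<integral>\<^sup>+s\<in>{0<..x}. ennreal \<bar>v s\<bar> \<partial>lborel)"
  shows "(\<integral>\<^sup>+x\<in>{0<..L}. ennreal ((w x)\<^sup>2 / x\<^sup>2) \<partial>lborel)
    \<le> 4 * (\<integral>\<^sup>+s\<in>{0<..L}. ennreal ((v s)\<^sup>2) \<partial>lborel)"
proof -
  define A where "A x = (\<integral>\<^sup>+s\<in>{0<..x}. ennreal ((v s)\<^sup>2 * s powr (1/2)) \<partial>lborel)" for x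
  have pointwise: "ennreal ((w x)\<^sup>2 / x\<^sup>2) \<le> ennreal (2 * x powr (-3/2)) * A x"
    if x: "0 < x" "x \<le> L" for x
  proof -
    have "ennreal ((w x)\<^sup>2) = (ennreal \<bar>w x\<bar>)\<^sup>2"
      by (simp add: ennreal_power)
    also have "\<dots> \<le> (\<integral>\<^sup>+s\<in>{0<..x}. ennreal \<bar>v s\<bar> \<partial>lborel)\<^sup>2"
      using w_le[OF x] by (intro power_mono) auto
    also have "\<dots> \<le> ennreal (2 * sqrt x) * A x"
      unfolding A_def using x(1) by (rule Cauchy_Schwarz_nn_integral_Ioc) measurable
    finally have "ennreal ((w x)\<^sup>2) * ennreal (1 / x\<^sup>2) \<le> ennreal (2 * sqrt x) * A x * ennreal (1 / x\<^sup>2)"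
      by (rule mult_right_mono) simp
    moreover have "2 * sqrt x * (1 / x\<^sup>2) = 2 * x powr (-3/2)"
    proof -
      have "x powr (3/2) = x * sqrt x"
        using x powr_add[of x 1 "1/2"] by (simp add: powr_half_sqrt)
      then show ?thesis
        using x by (simp add: powr_minus power2_eq_square field_simps)
    qed
    ultimately show ?thesis
      using x by (simp add: ennreal_mult'[symmetric] mult_ac)
  qed
  have "(\<integral>\<^sup>+x\<in>{0<..L}. ennreal ((w x)\<^sup>2 / x\<^sup>2) \<partial>lborel)
      \<le> (\<integral>\<^sup>+x. ennreal (2 * x powr (-3/2)) * indicator {0<..L} x * A x \<partial>lborel)"
  proof (intro nn_integral_mono)
    fix x
    show "ennreal ((w x)\<^sup>2 / x\<^sup>2) * indicator {0<..L} x \<le> ennreal (2 * x powr (-3/2)) * indicator {0<..L} x * A x"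
      using pointwise[of x] by (cases "x \<in> {0<..L}") (auto simp: mult.commute)
  qed
  also have "\<dots> \<le> (\<integral>\<^sup>+s. ennreal ((v s)\<^sup>2 * s powr (1/2)) * indicator {0<..L} s * ennreal (4 / sqrt s) \<partial>lborel)"
    unfolding A_def by (rule nn_integral_Hardy_kernel_le) measurable
  also have "\<dots> = (\<integral>\<^sup>+s. 4 * (ennreal ((v s)\<^sup>2) * indicator {0<..L} s) \<partial>lborel)"
  proof (intro nn_integral_cong)
    fix s
    have "0 < s \<Longrightarrow> ennreal ((v s)\<^sup>2 * s powr (1/2)) * ennreal (4 / sqrt s) = 4 * ennreal ((v s)\<^sup>2)"
      by (simp add: powr_half_sqrt ennreal_mult'[symmetric]) (simp add: ennreal_mult' mult.commute)
    then show "ennreal ((v s)\<^sup>2 * s powr (1/2)) * indicator {0<..L} s * ennreal (4 / sqrt s)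
        = 4 * (ennreal ((v s)\<^sup>2) * indicator {0<..L} s)"
      by (cases "s \<in> {0<..L}") (simp_all add: mult_ac)
  qed
  also have "\<dots> = 4 * (\<integral>\<^sup>+s\<in>{0<..L}. ennreal ((v s)\<^sup>2) \<partial>lborel)"
    by (rule nn_integral_cmult) measurable
  finally show ?thesis .
qed

lemma nn_integral_shift_Ioc:
  fixes f :: "real \<Rightarrow> ennreal"
  assumes "f \<in> borel_measurable borel"
  shows "(\<integral>\<^sup>+x\<in>{x0<..x0 + L}. f x \<partial>lborel) = (\<integral>\<^sup>+s\<in>{0<..L}. f (x0 + s) \<partial>lborel)"
  using nn_integral_real_affine[of "\<lambda>x. f x * indicator {x0<..x0 + L} x" 1 x0] assms
  by (simp add: indicator_def)

lemma nn_integral_reflect_Ico: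
  fixes f :: "real \<Rightarrow> ennreal"
  assumes "f \<in> borel_measurable borel"
  shows "(\<integral>\<^sup>+x\<in>{x0 - L..<x0}. f x \<partial>lborel) = (\<integral>\<^sup>+s\<in>{0<..L}. f (x0 - s) \<partial>lborel)"
  using nn_integral_real_affine[of "\<lambda>x. f x * indicator {x0 - L..<x0} x" "-1" x0] assms
  by (simp add: indicator_def conj_commute)

lemma Hardy_inequality_right:
  fixes U V :: "real \<Rightarrow> real"
  assumes [measurable]: "U \<in> borel_measurable borel" "V \<in> borel_measurable borel"
    and U_le: "\<And>y. y \<in> {x0<..x0 + L} \<Longrightarrow> ennreal \<bar>U y\<bar> \<le> (\<integral>\<^sup>+r\<in>{x0<..y}. ennreal \<bar>V r\<bar> \<partial>lborel)"
  shows "(\<integral>\<^sup>+r\<in>{x0<..x0 + L}. ennreal ((U r)\<^sup>2 / (r - x0)\<^sup>2) \<partial>lborel)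
    \<le> 4 * (\<integral>\<^sup>+r\<in>{x0<..x0 + L}. ennreal ((V r)\<^sup>2) \<partial>lborel)"
proof -
  have shifted: "(\<integral>\<^sup>+s\<in>{0<..L}. ennreal ((U (x0 + s))\<^sup>2 / s\<^sup>2) \<partial>lborel)
      \<le> 4 * (\<integral>\<^sup>+s\<in>{0<..L}. ennreal ((V (x0 + s))\<^sup>2) \<partial>lborel)"
  proof (rule Hardy_inequality)
    fix s assume "0 < s" "s \<le> L"
    then have "ennreal \<bar>U (x0 + s)\<bar> \<le> (\<integral>\<^sup>+r\<in>{x0<..x0 + s}. ennreal \<bar>V r\<bar> \<partial>lborel)"
      by (intro U_le) auto
    also have "\<dots> = (\<integral>\<^sup>+r\<in>{0<..s}. ennreal \<bar>V (x0 + r)\<bar> \<partial>lborel)"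
      by (rule nn_integral_shift_Ioc) measurable
    finally show "ennreal \<bar>U (x0 + s)\<bar> \<le> \<dots>" .
  qed measurable
  show ?thesis
    by (subst (1 2) nn_integral_shift_Ioc) (measurable, measurable, use shifted in simp)
qed

lemma Hardy_inequality_left:
  fixes U V :: "real \<Rightarrow> real"
  assumes [measurable]: "U \<in> borel_measurable borel" "V \<in> borel_measurable borel"
    and U_le: "\<And>y. y \<in> {x0 - L..<x0} \<Longrightarrow> ennreal \<bar>U y\<bar> \<le> (\<integral>\<^sup>+r\<in>{y..<x0}. ennreal \<bar>V r\<bar> \<partial>lborel)"
  shows "(\<integral>\<^sup>+r\<in>{x0 - L..<x0}. ennreal ((U r)\<^sup>2 / (r - x0)\<^sup>2) \<partial>lborel)
    \<le> 4 * (\<integral>\<^sup>+r\<in>{x0 - L..<x0}. ennreal ((V r)\<^sup>2) \<partial>lborel)"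
proof -
  have shifted: "(\<integral>\<^sup>+s\<in>{0<..L}. ennreal ((U (x0 - s))\<^sup>2 / s\<^sup>2) \<partial>lborel)
      \<le> 4 * (\<integral>\<^sup>+s\<in>{0<..L}. ennreal ((V (x0 - s))\<^sup>2) \<partial>lborel)"
  proof (rule Hardy_inequality)
    fix s assume "0 < s" "s \<le> L"
    then have "ennreal \<bar>U (x0 - s)\<bar> \<le> (\<integral>\<^sup>+r\<in>{x0 - s..<x0}. ennreal \<bar>V r\<bar> \<partial>lborel)"
      by (intro U_le) auto
    also have "\<dots> = (\<integral>\<^sup>+r\<in>{0<..s}. ennreal \<bar>V (x0 - r)\<bar> \<partial>lborel)"
      by (rule nn_integral_reflect_Ico) measurable
    finally show "ennreal \<bar>U (x0 - s)\<bar> \<le> \<dots>" .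
  qed measurable
  show ?thesis
    by (subst (1 2) nn_integral_reflect_Ico) (measurable, measurable, use shifted in simp)
qed

lemma set_integral_eq_nn_integral:
  fixes f :: "'a \<Rightarrow> real"
  assumes "set_integrable M A f" and "\<And>x. x \<in> A \<Longrightarrow> 0 \<le> f x"
  shows "ennreal (LINT x:A|M. f x) = (\<integral>\<^sup>+x\<in>A. ennreal (f x) \<partial>M)"
proof -
  have "(\<integral>\<^sup>+x\<in>A. ennreal (f x) \<partial>M) = (\<integral>\<^sup>+x. ennreal (indicator A x *\<^sub>R f x) \<partial>M)"
    by (intro nn_integral_cong) (auto simp: indicator_def)
  also have "\<dots> = ennreal (LINT x:A|M. f x)"
    unfolding set_lebesgue_integral_def using assms unfolding set_integrable_def
    by (intro nn_integral_eq_integral) (auto simp: indicator_def)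
  finally show ?thesis ..
qed

lemma W11_set_integrable:
  "W11 a a' \<Longrightarrow> 0 \<le> p \<Longrightarrow> q \<le> 1 \<Longrightarrow> set_integrable lborel {p..q} a'"
  unfolding W11_def by (auto intro: set_integrable_subset)

lemma W11_eq_integral:
  assumes "W11 a a'" and "x \<in> {0..1}"
  shows "a x = a 0 + integral {0..x} a'"
proof -
  have "a x = a 0 + (LBINT t:{0..x}. a' t)"
    using assms unfolding W11_def by blast
  then show ?thesis
    using set_borel_integral_eq_integral(2)[OF W11_set_integrable[OF assms(1), of 0 x]] assms(2)
    by simp
qed

lemma W11_continuous_on: "W11 a a' \<Longrightarrow> continuous_on {0..1} a"
proof -
  assume W: "W11 a a'"
  have "a' integrable_on {0..1}"
    using set_borel_integral_eq_integral(1)[OF W11_set_integrable[OF W]] by simp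
  then have "continuous_on {0..1} (\<lambda>x. a 0 + integral {0..x} a')"
    by (intro continuous_intros indefinite_integral_continuous_1)
  then show ?thesis
    by (rule continuous_on_eq) (rule W11_eq_integral[OF W, symmetric])
qed

lemma W11_diff_eq_integral:
  assumes W: "W11 a a'" and "0 \<le> p" "p \<le> q" "q \<le> 1"
  shows "a q - a p = integral {p..q} a'"
proof -
  have "a' integrable_on {0..q}"
    using set_borel_integral_eq_integral(1)[OF W11_set_integrable[OF W]] assms by simp
  then have "integral {0..p} a' + integral {p..q} a' = integral {0..q} a'"
    using assms by (intro Henstock_Kurzweil_Integration.integral_combine) auto
  then show ?thesis
    using W11_eq_integral[OF W, of p] W11_eq_integral[OF W, of q] assms by simp
qed

lemma W11_diff_le_integral:
  assumes W: "W11 a a'" and pq: "0 \<le> p" "p \<le> q" "q \<le> 1"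
    and g: "continuous_on {p..q} g"
    and le: "AE s in lborel. s \<in> {p..q} \<longrightarrow> a' s \<le> g s"
  shows "a q - a p \<le> integral {p..q} g"
proof -
  have a': "set_integrable lborel {p..q} a'"
    using W11_set_integrable[OF W] pq by simp
  have g': "set_integrable lborel {p..q} g"
    using g by (rule borel_integrable_atLeastAtMost')
  have "a q - a p = (LBINT s:{p..q}. a' s)"
    using W11_diff_eq_integral[OF W pq] set_borel_integral_eq_integral(2)[OF a'] by simp
  also have "\<dots> \<le> (LBINT s:{p..q}. g s)"
    using a' g' le by (rule set_integral_mono_AE)
  also have "\<dots> = integral {p..q} g"
    using g' by (rule set_borel_integral_eq_integral(2))
  finally show ?thesis .
qed

lemma W11_uminus:
  assumes "W11 a a'"
  shows "W11 (\<lambda>x. - a x) (\<lambda>x. - a' x)"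
proof -
  have "set_integrable lborel {0..1} (\<lambda>x. - a' x)"
    using W11_set_integrable[OF assms, of 0 1] by (simp add: set_integrable_def)
  moreover have "- a x = - a 0 + (LBINT t:{0..x}. - a' t)" if x: "x \<in> {0..1}" for x
  proof -
    have "a x = a 0 + (LBINT t:{0..x}. a' t)"
      using assms x unfolding W11_def by blast
    then show ?thesis
      using set_integral_uminus[OF W11_set_integrable[OF assms, of 0 x]] x by simp
  qed
  ultimately show ?thesis
    unfolding W11_def by blast
qed

lemma W11_abs_diff_le:
  assumes W: "W11 a a'" and pq: "0 \<le> p" "p \<le> q" "q \<le> 1"
  shows "ennreal \<bar>a q - a p\<bar> \<le> (\<integral>\<^sup>+r\<in>{p..q}. ennreal \<bar>a' r\<bar> \<partial>lborel)"
proof -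
  have a': "set_integrable lborel {p..q} a'"
    using W11_set_integrable[OF W] pq by simp
  have "\<bar>a q - a p\<bar> = norm (LBINT s:{p..q}. a' s)"
    using W11_diff_eq_integral[OF W pq] set_borel_integral_eq_integral(2)[OF a'] by simp
  also have "\<dots> \<le> (LBINT s:{p..q}. \<bar>a' s\<bar>)"
    using set_integral_norm_bound[OF a'] by simp
  finally have "ennreal \<bar>a q - a p\<bar> \<le> ennreal (LBINT s:{p..q}. \<bar>a' s\<bar>)"
    by (rule ennreal_leI)
  also have "\<dots> = (\<integral>\<^sup>+r\<in>{p..q}. ennreal \<bar>a' r\<bar> \<partial>lborel)"
    by (rule set_integral_eq_nn_integral) (auto intro: set_integrable_abs[OF a'])
  finally show ?thesis .
qed

lemma H10_imp_W11:
  assumes "H10 u u'"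
  shows "W11 u u'"
proof -
  have u': "set_borel_measurable lborel {0..1} u'" "set_integrable lborel {0..1} (\<lambda>x. (u' x)\<^sup>2)"
    and u: "\<forall>x\<in>{0..1}. u x = (LBINT t:{0..x}. u' t)"
    using assms unfolding H10_def by auto
  have abs_le: "\<bar>t\<bar> \<le> 1 + t\<^sup>2" for t :: real
  proof (cases "\<bar>t\<bar> \<le> 1")
    case False
    then have "\<bar>t\<bar> * 1 \<le> \<bar>t\<bar> * \<bar>t\<bar>"
      by (intro mult_left_mono) auto
    then show ?thesis
      by (simp add: power2_eq_square abs_mult_self_eq)
  qed (simp add: add_increasing2)
  have "set_integrable lborel {0..1} (\<lambda>x. 1 + (u' x)\<^sup>2)"
    using borel_integrable_atLeastAtMost'[OF continuous_on_const, of 0 1 "1::real"]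
    by (intro set_integral_add(1) u'(2)) simp
  then have "set_integrable lborel {0..1} u'"
    by (rule set_integrable_bound[OF _ u'(1)]) (auto intro!: AE_I2 abs_le)
  moreover have "u 0 = 0"
    using u set_borel_integral_eq_integral(2)[OF set_integrable_subset[OF \<open>set_integrable lborel {0..1} u'\<close>, of "{0..0}"]]
    by simp
  ultimately show ?thesis
    unfolding W11_def using u by simp
qed

lemma W11_indicator_measurable:
  "W11 a a' \<Longrightarrow> (\<lambda>x. indicator {0..1} x * a x) \<in> borel_measurable borel"
  using borel_measurable_continuous_on_indicator[OF _ W11_continuous_on] by simp

lemma nn_integral_split_at:
  fixes f :: "real \<Rightarrow> ennreal"
  assumes [measurable]: "f \<in> borel_measurable borel" and "x0 \<in> {a..b}"
  shows "(\<integral>\<^sup>+x\<in>{a..b}. f x \<partial>lborel) = (\<integral>\<^sup>+x\<in>{a..<x0}. f x \<partial>lborel) + (\<integral>\<^sup>+x\<in>{x0<..b}. f x \<partial>lborel)"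
proof -
  have "(\<integral>\<^sup>+x\<in>{a..b}. f x \<partial>lborel) = (\<integral>\<^sup>+x. f x * indicator {a..<x0} x + f x * indicator {x0<..b} x \<partial>lborel)"
    by (intro nn_integral_cong_AE eventually_mono[OF AE_lborel_singleton[of x0]])
       (use assms(2) in \<open>auto simp: indicator_def\<close>)
  also have "\<dots> = (\<integral>\<^sup>+x\<in>{a..<x0}. f x \<partial>lborel) + (\<integral>\<^sup>+x\<in>{x0<..b}. f x \<partial>lborel)"
    by (rule nn_integral_add) measurable
  finally show ?thesis .
qed

lemma Hardy_inequality_interior:
  assumes x0: "0 < x0" "x0 < 1" and W: "W11 u u'"
    and u'_meas: "set_borel_measurable lborel {0..1} u'" and "u x0 = 0"
  shows "(\<integral>\<^sup>+x\<in>{0..1}. ennreal ((u x)\<^sup>2 / (x - x0)\<^sup>2) \<partial>lborel)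
    \<le> 4 * (\<integral>\<^sup>+x\<in>{0..1}. ennreal ((u' x)\<^sup>2) \<partial>lborel)"
proof -
  define U where "U x = indicator {0..1} x * u x" for x
  define V where "V x = indicator {0..1} x * u' x" for x
  have [measurable]: "U \<in> borel_measurable borel"
    unfolding U_def by (rule W11_indicator_measurable[OF W])
  have [measurable]: "V \<in> borel_measurable borel"
    using u'_meas unfolding set_borel_measurable_def V_def by simp
  have "(\<integral>\<^sup>+r\<in>{x0<..x0 + (1 - x0)}. ennreal ((U r)\<^sup>2 / (r - x0)\<^sup>2) \<partial>lborel)
      \<le> 4 * (\<integral>\<^sup>+r\<in>{x0<..x0 + (1 - x0)}. ennreal ((V r)\<^sup>2) \<partial>lborel)"
  proof (rule Hardy_inequality_right)
    fix y assume y: "y \<in> {x0<..x0 + (1 - x0)}"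
    then have "ennreal \<bar>U y\<bar> = ennreal \<bar>u y - u x0\<bar>"
      using x0 \<open>u x0 = 0\<close> by (simp add: U_def)
    also have "\<dots> \<le> (\<integral>\<^sup>+r\<in>{x0..y}. ennreal \<bar>u' r\<bar> \<partial>lborel)"
      using y x0 by (intro W11_abs_diff_le[OF W]) auto
    also have "\<dots> = (\<integral>\<^sup>+r\<in>{x0<..y}. ennreal \<bar>V r\<bar> \<partial>lborel)"
      unfolding V_def by (intro nn_integral_cong_AE eventually_mono[OF AE_lborel_singleton[of x0]])
        (use y x0 in \<open>auto split: split_indicator\<close>)
    finally show "ennreal \<bar>U y\<bar> \<le> \<dots>" .
  qed measurable
  then have right: "(\<integral>\<^sup>+r\<in>{x0<..1}. ennreal ((U r)\<^sup>2 / (r - x0)\<^sup>2) \<partial>lborel)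
      \<le> 4 * (\<integral>\<^sup>+r\<in>{x0<..1}. ennreal ((V r)\<^sup>2) \<partial>lborel)"
    by simp
  have "(\<integral>\<^sup>+r\<in>{x0 - x0..<x0}. ennreal ((U r)\<^sup>2 / (r - x0)\<^sup>2) \<partial>lborel)
      \<le> 4 * (\<integral>\<^sup>+r\<in>{x0 - x0..<x0}. ennreal ((V r)\<^sup>2) \<partial>lborel)"
  proof (rule Hardy_inequality_left)
    fix y assume y: "y \<in> {x0 - x0..<x0}"
    then have "ennreal \<bar>U y\<bar> = ennreal \<bar>u x0 - u y\<bar>"
      using x0 \<open>u x0 = 0\<close> by (simp add: U_def)
    also have "\<dots> \<le> (\<integral>\<^sup>+r\<in>{y..x0}. ennreal \<bar>u' r\<bar> \<partial>lborel)"
      using y x0 by (intro W11_abs_diff_le[OF W]) auto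
    also have "\<dots> = (\<integral>\<^sup>+r\<in>{y..<x0}. ennreal \<bar>V r\<bar> \<partial>lborel)"
      unfolding V_def by (intro nn_integral_cong_AE eventually_mono[OF AE_lborel_singleton[of x0]])
        (use y x0 in \<open>auto split: split_indicator\<close>)
    finally show "ennreal \<bar>U y\<bar> \<le> \<dots>" .
  qed measurable
  then have left: "(\<integral>\<^sup>+r\<in>{0..<x0}. ennreal ((U r)\<^sup>2 / (r - x0)\<^sup>2) \<partial>lborel)
      \<le> 4 * (\<integral>\<^sup>+r\<in>{0..<x0}. ennreal ((V r)\<^sup>2) \<partial>lborel)"
    by simp
  have "(\<integral>\<^sup>+x\<in>{0..1}. ennreal ((u x)\<^sup>2 / (x - x0)\<^sup>2) \<partial>lborel)
      = (\<integral>\<^sup>+x\<in>{0..1}. ennreal ((U x)\<^sup>2 / (x - x0)\<^sup>2) \<partial>lborel)"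
    by (intro nn_integral_cong) (simp add: U_def indicator_def)
  also have "\<dots> = (\<integral>\<^sup>+x\<in>{0..<x0}. ennreal ((U x)\<^sup>2 / (x - x0)\<^sup>2) \<partial>lborel)
      + (\<integral>\<^sup>+x\<in>{x0<..1}. ennreal ((U x)\<^sup>2 / (x - x0)\<^sup>2) \<partial>lborel)"
    by (rule nn_integral_split_at) (use x0 in auto)
  also have "\<dots> \<le> 4 * (\<integral>\<^sup>+x\<in>{0..<x0}. ennreal ((V x)\<^sup>2) \<partial>lborel)
      + 4 * (\<integral>\<^sup>+x\<in>{x0<..1}. ennreal ((V x)\<^sup>2) \<partial>lborel)"
    using left right by (rule add_mono)
  also have "\<dots> = 4 * (\<integral>\<^sup>+x\<in>{0..1}. ennreal ((V x)\<^sup>2) \<partial>lborel)"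
    unfolding distrib_left[symmetric] using x0 by (subst nn_integral_split_at[of _ x0]) auto
  also have "(\<integral>\<^sup>+x\<in>{0..1}. ennreal ((V x)\<^sup>2) \<partial>lborel) = (\<integral>\<^sup>+x\<in>{0..1}. ennreal ((u' x)\<^sup>2) \<partial>lborel)"
    by (intro nn_integral_cong) (simp add: V_def indicator_def)
  finally show ?thesis .
qed

lemma weighted_Hardy_inequality:
  assumes x0: "0 < x0" "x0 < 1" and c: "c > 0" and w_ge: "\<forall>x\<in>{0..1}. c * (x - x0)\<^sup>2 \<le> w x"
    and W: "W11 u u'" and u'_meas: "set_borel_measurable lborel {0..1} u'" and "u x0 = 0"
    and int_u: "set_integrable lborel {0..1} (\<lambda>x. (u x)\<^sup>2 / w x)"
    and int_u': "set_integrable lborel {0..1} (\<lambda>x. (u' x)\<^sup>2)"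
  shows "(LBINT x:{0..1}. (u x)\<^sup>2 / w x) \<le> 4 / c * (LBINT x:{0..1}. (u' x)\<^sup>2)"
proof -
  define Q where "Q = (LBINT x:{0..1}. (u' x)\<^sup>2)"
  have Q_nonneg: "0 \<le> Q"
    unfolding Q_def set_lebesgue_integral_def by (intro integral_nonneg_AE AE_I2) simp
  have w_nonneg: "0 \<le> w x" if "x \<in> {0..1}" for x
    using w_ge that c by (meson order_trans mult_nonneg_nonneg less_imp_le zero_le_power2)
  have pointwise: "(u x)\<^sup>2 / w x \<le> 1 / c * ((u x)\<^sup>2 / (x - x0)\<^sup>2)" if x: "x \<in> {0..1}" for x
  proof (cases "x = x0")
    case False
    then have "0 < c * (x - x0)\<^sup>2"
      using c by simp
    moreover have "c * (x - x0)\<^sup>2 \<le> w x"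
      using w_ge x by blast
    ultimately have "(u x)\<^sup>2 / w x \<le> (u x)\<^sup>2 / (c * (x - x0)\<^sup>2)"
      by (intro divide_left_mono) auto
    then show ?thesis
      by simp
  qed (simp add: \<open>u x0 = 0\<close>)
  have [measurable]: "(\<lambda>x. indicator {0..1} x * u x) \<in> borel_measurable borel"
    by (rule W11_indicator_measurable[OF W])
  have "(\<lambda>x. ennreal ((u x)\<^sup>2 / (x - x0)\<^sup>2) * indicator {0..1} x)
      = (\<lambda>x. ennreal ((indicator {0..1} x * u x)\<^sup>2 / (x - x0)\<^sup>2) * indicator {0..1} x)"
    by (auto simp: fun_eq_iff split: split_indicator)
  also have "\<dots> \<in> borel_measurable borel"
    by measurable
  finally have [measurable]: "(\<lambda>x. ennreal ((u x)\<^sup>2 / (x - x0)\<^sup>2) * indicator {0..1} x) \<in> borel_measurable borel" .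
  have "ennreal (LBINT x:{0..1}. (u x)\<^sup>2 / w x) = (\<integral>\<^sup>+x\<in>{0..1}. ennreal ((u x)\<^sup>2 / w x) \<partial>lborel)"
    using int_u w_nonneg by (intro set_integral_eq_nn_integral) auto
  also have "\<dots> \<le> (\<integral>\<^sup>+x. ennreal (1 / c) * (ennreal ((u x)\<^sup>2 / (x - x0)\<^sup>2) * indicator {0..1} x) \<partial>lborel)"
    using pointwise c
    by (intro nn_integral_mono) (auto simp: ennreal_mult'[symmetric] intro: ennreal_leI split: split_indicator)
  also have "\<dots> = ennreal (1 / c) * (\<integral>\<^sup>+x\<in>{0..1}. ennreal ((u x)\<^sup>2 / (x - x0)\<^sup>2) \<partial>lborel)"
    by (rule nn_integral_cmult) measurable
  also have "\<dots> \<le> ennreal (1 / c) * (4 * (\<integral>\<^sup>+x\<in>{0..1}. ennreal ((u' x)\<^sup>2) \<partial>lborel))"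
    using Hardy_inequality_interior[OF x0 W u'_meas \<open>u x0 = 0\<close>] by (rule mult_left_mono) simp
  also have "(\<integral>\<^sup>+x\<in>{0..1}. ennreal ((u' x)\<^sup>2) \<partial>lborel) = ennreal Q"
    unfolding Q_def using int_u' by (intro set_integral_eq_nn_integral[symmetric]) auto
  also have "ennreal (1 / c) * (4 * ennreal Q) = ennreal (4 / c * Q)"
    using c ennreal_mult'[of "1 / c" "4 * Q"] ennreal_mult'[of 4 Q] by simp
  finally have "ennreal (LBINT x:{0..1}. (u x)\<^sup>2 / w x) \<le> ennreal (4 / c * Q)" .
  then show ?thesis
    unfolding Q_def[symmetric] using c Q_nonneg by simp
qed

lemma Gronwall_quotient_decreasing:
  fixes \<phi> :: "real \<Rightarrow> real"
  assumes "x0 < p" "p \<le> q" "0 \<le> K"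
    and cont: "continuous_on {p..q} \<phi>"
    and le: "\<And>t. t \<in> {p..q} \<Longrightarrow> \<phi> t \<le> \<phi> p + integral {p..t} (\<lambda>s. K * \<phi> s / (s - x0))"
  shows "(\<phi> p + integral {p..q} (\<lambda>s. K * \<phi> s / (s - x0))) * (q - x0) powr (-K) \<le> \<phi> p * (p - x0) powr (-K)"
proof -
  define g where "g s = K * \<phi> s / (s - x0)" for s
  define R where "R t = integral {p..t} g" for t
  define G where "G t = (\<phi> p + R t) * (t - x0) powr (-K)" for t
  have g_cont: "continuous_on {p..q} g"
    unfolding g_def using assms by (intro continuous_intros cont) auto
  have "continuous_on {p..q} R"
    unfolding R_def by (intro indefinite_integral_continuous_1 integrable_continuous_real g_cont)
  then have G_cont: "continuous_on {p..q} G"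
    unfolding G_def using assms by (intro continuous_intros) auto
  have "G q \<le> G p"
  proof (rule DERIV_nonpos_imp_decreasing_open[OF \<open>p \<le> q\<close> _ G_cont])
    fix t assume t: "p < t" "t < q"
    have tx: "t - x0 > 0" using t assms by auto
    have "(R has_real_derivative g t) (at t)"
      using integral_has_real_derivative[OF g_cont, of t] t unfolding R_def
      by (simp add: at_within_Icc_at)
    moreover have "((\<lambda>t. (t - x0) powr (-K)) has_real_derivative (-K) * (t - x0) powr (-K - 1)) (at t)"
      using tx by (auto intro!: derivative_eq_intros)
    ultimately have "(G has_real_derivative (0 + g t) * (t - x0) powr (-K) + (-K) * (t - x0) powr (-K - 1) * (\<phi> p + R t)) (at t)"
      unfolding G_def by (intro DERIV_mult DERIV_add DERIV_const)
    moreover have "(0 + g t) * (t - x0) powr (-K) + (-K) * (t - x0) powr (-K - 1) * (\<phi> p + R t)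
        = K * (t - x0) powr (-K - 1) * (\<phi> t - (\<phi> p + R t))"
    proof -
      have split: "(t - x0) powr (-K) = (t - x0) powr (-K - 1) * (t - x0)"
        using tx powr_add[of "t - x0" "-K - 1" 1] by simp
      show ?thesis
        unfolding split g_def using tx by (simp add: field_simps)
    qed
    moreover have "K * (t - x0) powr (-K - 1) * (\<phi> t - (\<phi> p + R t)) \<le> 0"
      using le[of t] t assms unfolding R_def g_def by (intro mult_nonneg_nonpos) auto
    ultimately show "\<exists>y. (G has_real_derivative y) (at t) \<and> y \<le> 0"
      by auto
  qed
  then show ?thesis
    unfolding G_def R_def g_def by simp
qed

lemma Gronwall_power_right:
  fixes \<phi> :: "real \<Rightarrow> real"
  assumes "x0 < p" "p \<le> q" "0 \<le> K"
    and cont: "continuous_on {p..q} \<phi>"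
    and le: "\<And>t. t \<in> {p..q} \<Longrightarrow> \<phi> t \<le> \<phi> p + integral {p..t} (\<lambda>s. K * \<phi> s / (s - x0))"
  shows "\<phi> q * (p - x0) powr K \<le> \<phi> p * (q - x0) powr K"
proof -
  let ?R = "integral {p..q} (\<lambda>s. K * \<phi> s / (s - x0))"
  have cancel: "(t - x0) powr (-K) * (t - x0) powr K = 1" if "t \<in> {p, q}" for t
    using assms that powr_add[of "t - x0" "-K" K] by auto
  have "\<phi> q * (p - x0) powr K \<le> (\<phi> p + ?R) * (p - x0) powr K"
    using le[of q] assms by (intro mult_right_mono) auto
  also have "\<dots> = (\<phi> p + ?R) * (q - x0) powr (-K) * ((q - x0) powr K * (p - x0) powr K)"
    using cancel[of q] by (simp add: mult_ac)
  also have "\<dots> \<le> \<phi> p * (p - x0) powr (-K) * ((q - x0) powr K * (p - x0) powr K)"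
    using Gronwall_quotient_decreasing[OF assms] by (rule mult_right_mono) (auto intro: mult_nonneg_nonneg)
  also have "\<dots> = \<phi> p * (q - x0) powr K"
    using cancel[of p] by (simp add: mult_ac)
  finally show ?thesis .
qed

lemma Gronwall_power_left:
  fixes \<phi> :: "real \<Rightarrow> real"
  assumes "q < x0" "p \<le> q" "0 \<le> K"
    and cont: "continuous_on {p..q} \<phi>"
    and le: "\<And>t. t \<in> {p..q} \<Longrightarrow> \<phi> t \<le> \<phi> q + integral {t..q} (\<lambda>s. K * \<phi> s / (x0 - s))"
  shows "\<phi> p * (x0 - q) powr K \<le> \<phi> q * (x0 - p) powr K"
proof -
  have reflected_cont: "continuous_on {-q..-p} (\<lambda>t. \<phi> (- t))"
    by (rule continuous_on_compose2[OF cont]) (auto intro: continuous_intros)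
  have "\<phi> (- (- p)) * (- q - (- x0)) powr K \<le> \<phi> (- (- q)) * (- p - (- x0)) powr K"
  proof (rule Gronwall_power_right[OF _ _ _ reflected_cont])
    fix t assume t: "t \<in> {-q..-p}"
    have "integral {-q..-(-t)} (\<lambda>s. (\<lambda>s. K * \<phi> s / (x0 - s)) (- s))
        = integral {-t..q} (\<lambda>s. K * \<phi> s / (x0 - s))"
      using Henstock_Kurzweil_Integration.integral_reflect_real[of q "-t" "\<lambda>s. K * \<phi> s / (x0 - s)"] .
    then have "integral {-q..t} (\<lambda>s. K * \<phi> (- s) / (s - - x0)) = integral {-t..q} (\<lambda>s. K * \<phi> s / (x0 - s))"
      by (simp add: add.commute)
    then show "\<phi> (- t) \<le> \<phi> (- (- q)) + integral {-q..t} (\<lambda>s. K * \<phi> (- s) / (s - - x0))"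
      using le[of "-t"] t by auto
  qed (use assms in auto)
  then show ?thesis
    by (simp add: add.commute)
qed

lemma degeneracy_growth_right:
  assumes x0: "0 < x0" and K: "0 \<le> K" and W: "W11 a a'"
    and deg: "AE x in lborel. x \<in> {0..1} \<longrightarrow> (x - x0) * a' x \<le> K * a x"
    and x: "x0 < x" "x \<le> 1"
  shows "a 1 * (x - x0) powr K \<le> a x * (1 - x0) powr K"
proof (rule Gronwall_power_right[OF x _ continuous_on_subset[OF W11_continuous_on[OF W]]])
  fix t assume t: "t \<in> {x..1}"
  have "a t - a x \<le> integral {x..t} (\<lambda>s. K * a s / (s - x0))"
  proof (rule W11_diff_le_integral[OF W])
    show "continuous_on {x..t} (\<lambda>s. K * a s / (s - x0))"
      using x x0 t by (intro continuous_intros continuous_on_subset[OF W11_continuous_on[OF W]]) auto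
    show "AE s in lborel. s \<in> {x..t} \<longrightarrow> a' s \<le> K * a s / (s - x0)"
      by (rule eventually_mono[OF deg]) (use x x0 t in \<open>auto simp: pos_le_divide_eq mult.commute\<close>)
  qed (use x x0 t in auto)
  then show "a t \<le> a x + integral {x..t} (\<lambda>s. K * a s / (s - x0))"
    by simp
qed (use K x0 x in auto)

lemma degeneracy_growth_left:
  assumes x0: "x0 < 1" and K: "0 \<le> K" and W: "W11 a a'"
    and deg: "AE x in lborel. x \<in> {0..1} \<longrightarrow> (x - x0) * a' x \<le> K * a x"
    and x: "0 \<le> x" "x < x0"
  shows "a 0 * (x0 - x) powr K \<le> a x * x0 powr K"
proof -
  have "a 0 * (x0 - x) powr K \<le> a x * (x0 - 0) powr K"
  proof (rule Gronwall_power_left[OF x(2) x(1) K continuous_on_subset[OF W11_continuous_on[OF W]]])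
    fix t assume t: "t \<in> {0..x}"
    have "- a x - - a t \<le> integral {t..x} (\<lambda>s. K * a s / (x0 - s))"
    proof (rule W11_diff_le_integral[OF W11_uminus[OF W]])
      show "continuous_on {t..x} (\<lambda>s. K * a s / (x0 - s))"
        using x x0 t by (intro continuous_intros continuous_on_subset[OF W11_continuous_on[OF W]]) auto
      show "AE s in lborel. s \<in> {t..x} \<longrightarrow> - a' s \<le> K * a s / (x0 - s)"
        by (rule eventually_mono[OF deg]) (use x x0 t in \<open>auto simp: pos_le_divide_eq algebra_simps\<close>)
    qed (use x x0 t in auto)
    then show "a t \<le> a x + integral {t..x} (\<lambda>s. K * a s / (x0 - s))"
      by simp
  qed (use x0 x in auto)
  then show ?thesis
    by simp
qed

lemma degeneracy_lower_bound:
  assumes x0: "0 < x0" "x0 < 1" and K: "0 < K" and W: "W11 a a'"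
    and deg: "AE x in lborel. x \<in> {0..1} \<longrightarrow> (x - x0) * a' x \<le> K * a x"
    and "a x0 = 0" and pos: "\<forall>x\<in>{0..1}. x \<noteq> x0 \<longrightarrow> a x > 0"
  shows "\<exists>c>0. \<forall>x\<in>{0..1}. c * \<bar>x - x0\<bar> powr K \<le> a x"
proof -
  note right = degeneracy_growth_right[OF x0(1) less_imp_le[OF K] W deg]
  note left = degeneracy_growth_left[OF x0(2) less_imp_le[OF K] W deg]
  define c where "c = min (a 1 / (1 - x0) powr K) (a 0 / x0 powr K)"
  have "c > 0"
    unfolding c_def using pos x0 by auto
  moreover have "c * \<bar>x - x0\<bar> powr K \<le> a x" if x: "x \<in> {0..1}" for x
  proof -
    have rescale: "c * d \<le> B" if "c \<le> A / D" "0 < D" "0 \<le> d" "A * d \<le> B * D" for A D d B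
    proof -
      have "c * d \<le> A / D * d"
        using that by (intro mult_right_mono) auto
      also have "\<dots> \<le> B"
        using that by (simp add: divide_le_eq mult.commute)
      finally show ?thesis .
    qed
    consider "x = x0" | "x0 < x" | "x < x0" by linarith
    then show ?thesis
    proof cases
      case 1
      then show ?thesis using \<open>a x0 = 0\<close> by simp
    next
      case 2
      then have "c * (x - x0) powr K \<le> a x"
        using right[of x] x x0 pos by (intro rescale[of "a 1" "(1 - x0) powr K"]) (auto simp: c_def)
      then show ?thesis
        using 2 by simp
    next
      case 3
      then have "c * (x0 - x) powr K \<le> a x"
        using left[of x] x x0 pos by (intro rescale[of "a 0" "x0 powr K"]) (auto simp: c_def)
      then show ?thesis
        using 3 by (simp add: abs_minus_commute)
    qed
  qed
  ultimately show ?thesis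
    by blast
qed

lemma deg_W11:
  assumes "weak_deg a x0 K \<or> strong_deg a x0 K"
  obtains a' where "0 < K" "W11 a a'" "AE x in lborel. x \<in> {0..1} \<longrightarrow> (x - x0) * a' x \<le> K * a x"
  using assms unfolding weak_deg_def strong_deg_def W1inf_def by auto

lemma H2_H3_H4_deg:
  assumes "H2 a b x0 \<or> H3 a b x0 \<or> H4 a b x0"
  obtains K1 K2 where "weak_deg a x0 K1 \<or> strong_deg a x0 K1" "weak_deg b x0 K2 \<or> strong_deg b x0 K2"
    "K1 + K2 \<le> 2"
  using assms unfolding H2_def H3_def H4_def WWD_def WSD_def SWD_def SSD_def by force

lemma product_lower_bound:
  assumes x0: "0 < x0" "x0 < 1" and "a x0 = 0" "b x0 = 0"
    and pos: "\<forall>x\<in>{0..1}. x \<noteq> x0 \<longrightarrow> a x > 0 \<and> b x > 0"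
    and H: "H2 a b x0 \<or> H3 a b x0 \<or> H4 a b x0"
  shows "\<exists>c>0. \<forall>x\<in>{0..1}. c * (x - x0)\<^sup>2 \<le> a x * b x"
proof -
  obtain K1 K2 where da: "weak_deg a x0 K1 \<or> strong_deg a x0 K1"
    and db: "weak_deg b x0 K2 \<or> strong_deg b x0 K2" and K: "K1 + K2 \<le> 2"
    using H2_H3_H4_deg[OF H] .
  obtain a' where K1: "0 < K1" and a': "W11 a a'" "AE x in lborel. x \<in> {0..1} \<longrightarrow> (x - x0) * a' x \<le> K1 * a x"
    using deg_W11[OF da] .
  obtain b' where K2: "0 < K2" and b': "W11 b b'" "AE x in lborel. x \<in> {0..1} \<longrightarrow> (x - x0) * b' x \<le> K2 * b x"
    using deg_W11[OF db] .
  obtain c1 where c1: "c1 > 0" "\<forall>x\<in>{0..1}. c1 * \<bar>x - x0\<bar> powr K1 \<le> a x"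
    using degeneracy_lower_bound[OF x0 K1 a'] assms by auto
  obtain c2 where c2: "c2 > 0" "\<forall>x\<in>{0..1}. c2 * \<bar>x - x0\<bar> powr K2 \<le> b x"
    using degeneracy_lower_bound[OF x0 K2 b'] assms by auto
  have "c1 * c2 * (x - x0)\<^sup>2 \<le> a x * b x" if x: "x \<in> {0..1}" for x
  proof -
    have "c1 * c2 * (x - x0)\<^sup>2 = c1 * c2 * \<bar>x - x0\<bar> powr 2"
      by (cases "x = x0") (auto simp: powr_realpow)
    also have "\<dots> \<le> c1 * c2 * \<bar>x - x0\<bar> powr (K1 + K2)"
      using K x x0 c1 c2 by (intro mult_left_mono powr_mono') auto
    also have "\<dots> = (c1 * \<bar>x - x0\<bar> powr K1) * (c2 * \<bar>x - x0\<bar> powr K2)"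
      by (simp add: powr_add)
    also have "\<dots> \<le> a x * b x"
      using c1 c2 x by (intro mult_mono) (auto intro: order_trans[of 0 "c1 * \<bar>x - x0\<bar> powr K1"])
    finally show ?thesis .
  qed
  then show ?thesis
    using c1 c2 by (intro exI[of _ "c1 * c2"]) auto
qed

lemma W1inf_lipschitz:
  assumes "W1inf a a'"
  obtains M where "0 \<le> M" "\<And>p q. 0 \<le> p \<Longrightarrow> p \<le> q \<Longrightarrow> q \<le> 1 \<Longrightarrow> \<bar>a q - a p\<bar> \<le> M * (q - p)"
proof -
  obtain M0 where W: "W11 a a'" and M0: "AE x in lborel. x \<in> {0..1} \<longrightarrow> \<bar>a' x\<bar> \<le> M0"
    using assms unfolding W1inf_def by blast
  define M where "M = max M0 0"
  have "\<bar>a q - a p\<bar> \<le> M * (q - p)" if pq: "0 \<le> p" "p \<le> q" "q \<le> 1" for p q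
  proof -
    have "a q - a p \<le> integral {p..q} (\<lambda>_. M)"
      by (rule W11_diff_le_integral[OF W pq continuous_on_const], rule eventually_mono[OF M0])
         (use pq in \<open>auto simp: M_def\<close>)
    moreover have "- a q - - a p \<le> integral {p..q} (\<lambda>_. M)"
      by (rule W11_diff_le_integral[OF W11_uminus[OF W] pq continuous_on_const], rule eventually_mono[OF M0])
         (use pq in \<open>auto simp: M_def\<close>)
    ultimately show ?thesis
      using pq by (simp add: mult.commute)
  qed
  then show thesis
    using that[of M] by (simp add: M_def)
qed

lemma W1inf_abs_le_dist:
  assumes "W1inf a a'" and "a x0 = 0" and "x0 \<in> {0..1}"
  obtains M where "0 \<le> M" "\<And>x. x \<in> {0..1} \<Longrightarrow> \<bar>a x\<bar> \<le> M * \<bar>x - x0\<bar>"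
proof -
  obtain M where M: "0 \<le> M" and lip: "\<And>p q. 0 \<le> p \<Longrightarrow> p \<le> q \<Longrightarrow> q \<le> 1 \<Longrightarrow> \<bar>a q - a p\<bar> \<le> M * (q - p)"
    using W1inf_lipschitz[OF assms(1)] by blast
  have "\<bar>a x\<bar> \<le> M * \<bar>x - x0\<bar>" if "x \<in> {0..1}" for x
    using lip[of x0 x] lip[of x x0] assms that by (cases "x0 \<le> x") (auto simp: abs_minus_commute)
  then show thesis
    using that M by blast
qed

lemma product_le_dist_of_power_bound:
  assumes pb: "power_bound a b x0 K1 K2" and K: "1 \<le> K1 + K2" and x0: "x0 \<in> {0..1}"
    and "a x0 = 0" and pos: "\<forall>x\<in>{0..1}. x \<noteq> x0 \<longrightarrow> a x > 0 \<and> b x > 0"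
  shows "\<exists>M>0. \<forall>x\<in>{0..1}. a x * b x \<le> M * \<bar>x - x0\<bar>"
proof -
  obtain c1 c2 where c: "c1 > 0" "c2 > 0"
    "\<forall>x\<in>{0..1}. \<bar>x - x0\<bar> powr K1 \<ge> c1 * a x \<and> \<bar>x - x0\<bar> powr K2 \<ge> c2 * b x"
    using pb unfolding power_bound_def by blast
  have "a x * b x \<le> 1 / (c1 * c2) * \<bar>x - x0\<bar>" if x: "x \<in> {0..1}" for x
  proof (cases "x = x0")
    case False
    have "(c1 * a x) * (c2 * b x) \<le> \<bar>x - x0\<bar> powr K1 * \<bar>x - x0\<bar> powr K2"
      using c x False pos by (intro mult_mono) auto
    also have "\<dots> = \<bar>x - x0\<bar> powr (K1 + K2)"
      by (simp add: powr_add)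
    also have "\<dots> \<le> \<bar>x - x0\<bar> powr 1"
      using K x x0 by (intro powr_mono') auto
    finally show ?thesis
      using c by (simp add: field_simps)
  qed (simp add: \<open>a x0 = 0\<close>)
  then show ?thesis
    using c by (intro exI[of _ "1 / (c1 * c2)"]) auto
qed

lemma product_le_dist_of_W1inf:
  assumes "W1inf a a'" "W1inf b b'" "a x0 = 0" "b x0 = 0" and x0: "x0 \<in> {0..1}"
  shows "\<exists>M>0. \<forall>x\<in>{0..1}. a x * b x \<le> M * \<bar>x - x0\<bar>"
proof -
  obtain Ma where Ma: "0 \<le> Ma" "\<And>x. x \<in> {0..1} \<Longrightarrow> \<bar>a x\<bar> \<le> Ma * \<bar>x - x0\<bar>"
    using W1inf_abs_le_dist[OF assms(1,3) x0] by blast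
  obtain Mb where Mb: "0 \<le> Mb" "\<And>x. x \<in> {0..1} \<Longrightarrow> \<bar>b x\<bar> \<le> Mb * \<bar>x - x0\<bar>"
    using W1inf_abs_le_dist[OF assms(2,4) x0] by blast
  have "a x * b x \<le> (Ma * Mb + 1) * \<bar>x - x0\<bar>" if x: "x \<in> {0..1}" for x
  proof -
    have "a x * b x \<le> (Ma * \<bar>x - x0\<bar>) * (Mb * \<bar>x - x0\<bar>)"
      using Ma(2)[OF x] Mb(2)[OF x] abs_mult[of "a x" "b x"]
      by (smt (verit) abs_ge_self abs_ge_zero mult_mono)
    also have "\<dots> = (Ma * Mb) * (\<bar>x - x0\<bar> * \<bar>x - x0\<bar>)"
      by (simp add: mult_ac)
    also have "\<dots> \<le> (Ma * Mb) * \<bar>x - x0\<bar>"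
      using x x0 Ma Mb by (intro mult_left_mono mult_left_le) auto
    also have "\<dots> \<le> (Ma * Mb + 1) * \<bar>x - x0\<bar>"
      by (simp add: algebra_simps)
    finally show ?thesis .
  qed
  then show ?thesis
    using Ma Mb by (intro exI[of _ "Ma * Mb + 1"]) (auto simp: add_nonneg_pos)
qed

lemma product_upper_bound:
  assumes x0: "0 < x0" "x0 < 1" and "a x0 = 0" "b x0 = 0"
    and pos: "\<forall>x\<in>{0..1}. x \<noteq> x0 \<longrightarrow> a x > 0 \<and> b x > 0"
    and H: "H2 a b x0 \<or> H3 a b x0 \<or> H4 a b x0"
  shows "\<exists>M>0. \<forall>x\<in>{0..1}. a x * b x \<le> M * \<bar>x - x0\<bar>"
proof -
  have x0': "x0 \<in> {0..1}"
    using x0 by auto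
  consider "H2 a b x0" | "H3 a b x0" | "H4 a b x0"
    using H by blast
  then show ?thesis
  proof cases
    case 1
    then obtain K1 K2 where "power_bound a b x0 K1 K2" "1 \<le> K1 + K2"
      unfolding H2_def by blast
    then show ?thesis
      using product_le_dist_of_power_bound x0' assms by blast
  next
    case 2
    then obtain K1 K2 where K: "WSD a b x0 K1 K2 \<or> SWD a b x0 K1 K2" and "power_bound a b x0 K1 K2"
      unfolding H3_def by blast
    moreover have "1 \<le> K1 + K2"
      using K unfolding WSD_def SWD_def weak_deg_def strong_deg_def by auto
    ultimately show ?thesis
      using product_le_dist_of_power_bound x0' assms by blast
  next
    case 3
    then obtain a' b' where "W1inf a a'" "W1inf b b'"
      unfolding H4_def SSD_def strong_deg_def by blast
    then show ?thesis
      using product_le_dist_of_W1inf x0' assms by blast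
  qed
qed

lemma nn_integral_inverse_dist:
  assumes "0 < e" "e \<le> d"
  shows "(\<integral>\<^sup>+x\<in>{x0 + e..x0 + d}. ennreal (1 / (x - x0)) \<partial>lborel) = ennreal (ln d - ln e)"
proof -
  have "((\<lambda>x. 1 / (x - x0)) has_integral (ln (x0 + d - x0) - ln (x0 + e - x0))) {x0 + e..x0 + d}"
  proof (rule fundamental_theorem_of_calculus[where f="\<lambda>x. ln (x - x0)"])
    fix x assume "x \<in> {x0 + e..x0 + d}"
    then have "x - x0 > 0"
      using assms by auto
    then have "((\<lambda>x. ln (x - x0)) has_real_derivative 1 / (x - x0)) (at x)"
      by (auto intro!: derivative_eq_intros)
    then show "((\<lambda>x. ln (x - x0)) has_vector_derivative 1 / (x - x0)) (at x within {x0 + e..x0 + d})"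
      by (simp add: has_real_derivative_iff_has_vector_derivative[symmetric] has_field_derivative_at_within)
  qed (use assms in simp)
  then show ?thesis
    by (intro nn_integral_has_integral_lebesgue') (use assms in auto)
qed

lemma nn_integral_over_weight_unbounded:
  fixes u w :: "real \<Rightarrow> real"
  assumes u: "continuous_on {0..1} u" and x0: "0 < x0" "x0 < 1" and "M > 0"
    and w_le: "\<forall>x\<in>{0..1}. w x \<le> M * \<bar>x - x0\<bar>" and w_pos: "\<forall>x\<in>{0..1}. x \<noteq> x0 \<longrightarrow> 0 < w x"
    and "u x0 \<noteq> 0"
  shows "ennreal B \<le> (\<integral>\<^sup>+x\<in>{0..1}. ennreal ((u x)\<^sup>2 / w x) \<partial>lborel)"
proof -
  define \<eta> where "\<eta> = (u x0)\<^sup>2 / 2"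
  have \<eta>: "\<eta> > 0"
    using \<open>u x0 \<noteq> 0\<close> unfolding \<eta>_def by simp
  have "continuous_on {0..1} (\<lambda>x. (u x)\<^sup>2)"
    by (intro continuous_intros u)
  then obtain d where d: "d > 0" "\<forall>x\<in>{0..1}. dist x x0 < d \<longrightarrow> dist ((u x)\<^sup>2) ((u x0)\<^sup>2) < \<eta>"
    unfolding continuous_on_iff using x0 \<eta> by (metis atLeastAtMost_iff less_imp_le)
  define \<delta> where "\<delta> = min (d / 2) (1 - x0)"
  have \<delta>: "\<delta> > 0" "\<delta> \<le> 1 - x0" "\<delta> < d"
    using d x0 unfolding \<delta>_def by auto
  \<comment> \<open>On (x0 + e, x0 + \<delta>) the integrand is at least \<eta>/(M(x - x0)), whose integral grows like
    -ln e; e is chosen to make it exceed B.\<close>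
  define e where "e = \<delta> * exp (- (max B 0 * M / \<eta>) - 1)"
  have "0 \<le> max B 0 * M / \<eta>"
    using \<eta> \<open>M > 0\<close> by simp
  then have "exp (- (max B 0 * M / \<eta>) - 1) \<le> 1"
    by simp
  then have e: "0 < e" "e \<le> \<delta>"
    unfolding e_def using \<delta> mult_left_le[of _ \<delta>] by auto
  have "ln \<delta> - ln e = max B 0 * M / \<eta> + 1"
    unfolding e_def using \<delta> by (simp add: ln_mult)
  then have "\<eta> / M * (ln \<delta> - ln e) = max B 0 + \<eta> / M"
    using \<eta> \<open>M > 0\<close> by (simp add: field_simps)
  then have "B \<le> \<eta> / M * (ln \<delta> - ln e)"
    using divide_pos_pos[OF \<eta> \<open>M > 0\<close>] by linarith
  then have "ennreal B \<le> ennreal (\<eta> / M) * ennreal (ln \<delta> - ln e)"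
    using \<eta> \<open>M > 0\<close> by (simp add: ennreal_mult'[symmetric] ennreal_leI)
  also have "\<dots> = ennreal (\<eta> / M) * (\<integral>\<^sup>+x\<in>{x0 + e..x0 + \<delta>}. ennreal (1 / (x - x0)) \<partial>lborel)"
    unfolding nn_integral_inverse_dist[OF e] ..
  also have "\<dots> = (\<integral>\<^sup>+x. ennreal (\<eta> / M) * (ennreal (1 / (x - x0)) * indicator {x0 + e..x0 + \<delta>} x) \<partial>lborel)"
    by (rule nn_integral_cmult[symmetric]) measurable
  also have "\<dots> \<le> (\<integral>\<^sup>+x\<in>{0..1}. ennreal ((u x)\<^sup>2 / w x) \<partial>lborel)"
  proof (intro nn_integral_mono)
    fix x :: real
    show "ennreal (\<eta> / M) * (ennreal (1 / (x - x0)) * indicator {x0 + e..x0 + \<delta>} x)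
        \<le> ennreal ((u x)\<^sup>2 / w x) * indicator {0..1} x"
    proof (cases "x \<in> {x0 + e..x0 + \<delta>}")
      case True
      then have x: "x \<in> {0..1}" "x \<noteq> x0" "x - x0 > 0" "dist x x0 < d"
        using e \<delta> x0 by (auto simp: dist_real_def)
      have w: "0 < w x" "w x \<le> M * (x - x0)"
        using w_pos w_le x by (auto dest: bspec[of _ _ x])
      have "\<bar>(u x)\<^sup>2 - (u x0)\<^sup>2\<bar> < \<eta>"
        using d x by (auto simp: dist_real_def)
      then have "\<eta> \<le> (u x)\<^sup>2"
        unfolding \<eta>_def by linarith
      have "\<eta> / M * (1 / (x - x0)) = \<eta> / (M * (x - x0))"
        by simp
      also have "\<dots> \<le> \<eta> / w x"
        using w x \<eta> \<open>M > 0\<close> by (intro divide_left_mono) auto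
      also have "\<dots> \<le> (u x)\<^sup>2 / w x"
        using w \<open>\<eta> \<le> (u x)\<^sup>2\<close> by (intro divide_right_mono) auto
      finally show ?thesis
        using True x \<eta> \<open>M > 0\<close> by (simp add: ennreal_mult'[symmetric] ennreal_leI)
    qed simp
  qed
  finally show ?thesis .
qed

lemma vanishes_if_integrable_over_weight:
  fixes u w :: "real \<Rightarrow> real"
  assumes u: "continuous_on {0..1} u" and x0: "0 < x0" "x0 < 1" and M: "M > 0"
    and w_le: "\<forall>x\<in>{0..1}. w x \<le> M * \<bar>x - x0\<bar>" and w_pos: "\<forall>x\<in>{0..1}. x \<noteq> x0 \<longrightarrow> 0 < w x"
    and "w x0 = 0" and int: "set_integrable lborel {0..1} (\<lambda>x. (u x)\<^sup>2 / w x)"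
  shows "u x0 = 0"
proof (rule ccontr)
  assume "u x0 \<noteq> 0"
  define I where "I = (LBINT x:{0..1}. (u x)\<^sup>2 / w x)"
  have nonneg: "0 \<le> (u x)\<^sup>2 / w x" if "x \<in> {0..1}" for x
    using w_pos \<open>w x0 = 0\<close> that by (cases "x = x0") (auto simp: less_imp_le)
  have "ennreal (I + 1) \<le> (\<integral>\<^sup>+x\<in>{0..1}. ennreal ((u x)\<^sup>2 / w x) \<partial>lborel)"
    by (rule nn_integral_over_weight_unbounded[OF u x0 M w_le w_pos \<open>u x0 \<noteq> 0\<close>])
  also have "\<dots> = ennreal I"
    unfolding I_def using set_integral_eq_nn_integral[OF int nonneg] ..
  finally have "I + 1 \<le> I"
    using nonneg unfolding I_def set_lebesgue_integral_def
    by (subst (asm) ennreal_le_iff) (auto simp: indicator_def intro!: integral_nonneg_AE AE_I2)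
  then show False
    by simp
qed

theorem lemma2p8:
  fixes a b :: "real \<Rightarrow> real" and x0 :: real
  assumes "0 < x0" and "x0 < 1"
    and "a x0 = 0" and "b x0 = 0"
    and "\<forall>x\<in>{0..1}. x \<noteq> x0 \<longrightarrow> a x > 0 \<and> b x > 0"
    and "H2 a b x0 \<or> H3 a b x0 \<or> H4 a b x0"
  shows "\<exists>C>0. \<forall>u u'. H10 u u'
           \<and> set_integrable lborel {0..1} (\<lambda>x. (u x)\<^sup>2 / a x)
           \<and> set_integrable lborel {0..1} (\<lambda>x. (u x)\<^sup>2 / (a x * b x))
           \<longrightarrow> (LBINT x:{0..1}. (u x)\<^sup>2 / (a x * b x)) \<le> C * (LBINT x:{0..1}. (u' x)\<^sup>2)"
proof -
  obtain c where c: "c > 0" "\<forall>x\<in>{0..1}. c * (x - x0)\<^sup>2 \<le> a x * b x"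
    using product_lower_bound[OF assms] by blast
  obtain M where M: "M > 0" "\<forall>x\<in>{0..1}. a x * b x \<le> M * \<bar>x - x0\<bar>"
    using product_upper_bound[OF assms] by blast
  have "(LBINT x:{0..1}. (u x)\<^sup>2 / (a x * b x)) \<le> 4 / c * (LBINT x:{0..1}. (u' x)\<^sup>2)"
    if H10: "H10 u u'" and int: "set_integrable lborel {0..1} (\<lambda>x. (u x)\<^sup>2 / (a x * b x))" for u u'
  proof -
    have W: "W11 u u'"
      using H10 by (rule H10_imp_W11)
    have "u x0 = 0"
      by (rule vanishes_if_integrable_over_weight[OF W11_continuous_on[OF W] assms(1,2) M _ _ int])
         (use assms(3,5) in auto)
    then show ?thesis
      using weighted_Hardy_inequality[OF assms(1,2) c W _ _ int] H10 unfolding H10_def by blast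
  qed
  then show ?thesis
    using c(1) by (intro exI[of _ "4 / c"]) auto
qed

end
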